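(* For any finite simple graph $X$ and any update sequence $\pi\in S_X$, the mixed extended threshold SDS map $\mathbf{F}^\updownarrow_\pi$ has no periodic orbits of length $\ge 2$.
   Context: Let $X$ be a finite simple graph with vertices $1,\dots,n$; $d(v)$ is the degree of $v$ and $n[v]$ the closed neighborhood of $v$. An extended vertex state is $s_v=(x_v,k_v)\in\{0,1\}\times\{1,\dots,d(v)+1\}$; $\mathcal{S}$ is the product of these sets. Let $\sigma(x[v])=|\{u\in n[v]:x_u=1\}|$. The mixed vertex function maps $(x_v,k_v)$ to $(x_v',k_v')$ with $x_v'=1$ iff $\sigma(x[v])\ge k_v$ (else $0$), and $k_v'=k_v+1$ if $x_v=0$ and $\sigma(x[v])\ge k_v$; $k_v'=k_v-1$ if $x_v=1$ and $\sigma(x[v])<k_v$; $k_v'=k_v$ otherwise. The local map $F^\updownarrow_v$ updates only coordinate $v$ by this rule, and for a permutation $\pi=(\pi_1,\dots,\pi_n)$ of the vertices, $\mathbf{F}^\updownarrow_\pi=F^\updownarrow_{\pi_n}\circ\cdots\circ F^\updownarrow_{\pi_1}$. A periodic orbit of length $m$ is a cycle of $m$ distinct states under iteration. *)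

theory Defs
  imports Main
begin

definition simple_graph :: "nat \<Rightarrow> (nat \<Rightarrow> nat \<Rightarrow> bool) \<Rightarrow> bool" where
  "simple_graph n E \<longleftrightarrow> (\<forall>u v. E u v \<longrightarrow> E v u) \<and> (\<forall>v. \<not> E v v)
     \<and> (\<forall>u v. E u v \<longrightarrow> u \<in> {1..n} \<and> v \<in> {1..n})"

definition nbhd :: "nat \<Rightarrow> (nat \<Rightarrow> nat \<Rightarrow> bool) \<Rightarrow> nat \<Rightarrow> nat set" where
  "nbhd n E v = {u \<in> {1..n}. E v u}"

definition deg :: "nat \<Rightarrow> (nat \<Rightarrow> nat \<Rightarrow> bool) \<Rightarrow> nat \<Rightarrow> nat" where
  "deg n E v = card (nbhd n E v)"

definition cnbhd :: "nat \<Rightarrow> (nat \<Rightarrow> nat \<Rightarrow> bool) \<Rightarrow> nat \<Rightarrow> nat set" where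
  "cnbhd n E v = insert v (nbhd n E v)"

text \<open>A system state: vertex v has state (x v, k v) with x v :: bool
  (True = 1) and threshold k v.\<close>
type_synonym state = "(nat \<Rightarrow> bool) \<times> (nat \<Rightarrow> nat)"

definition state_space :: "nat \<Rightarrow> (nat \<Rightarrow> nat \<Rightarrow> bool) \<Rightarrow> state set" where
  "state_space n E = {(x, k). (\<forall>v\<in>{1..n}. 1 \<le> k v \<and> k v \<le> deg n E v + 1)
      \<and> (\<forall>v. v \<notin> {1..n} \<longrightarrow> x v = False \<and> k v = 1)}"

definition sigma :: "nat \<Rightarrow> (nat \<Rightarrow> nat \<Rightarrow> bool) \<Rightarrow> (nat \<Rightarrow> bool) \<Rightarrow> nat \<Rightarrow> nat" where
  "sigma n E x v = card {u \<in> cnbhd n E v. x u}"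

definition mixed_vertex :: "nat \<Rightarrow> (nat \<Rightarrow> nat \<Rightarrow> bool) \<Rightarrow> state \<Rightarrow> nat \<Rightarrow> bool \<times> nat" where
  "mixed_vertex n E s v =
     (let x = fst s; k = snd s; sg = sigma n E x v in
       (k v \<le> sg,
        if \<not> x v \<and> k v \<le> sg then k v + 1
        else if x v \<and> sg < k v then k v - 1
        else k v))"

definition local_map :: "nat \<Rightarrow> (nat \<Rightarrow> nat \<Rightarrow> bool) \<Rightarrow> nat \<Rightarrow> state \<Rightarrow> state" where
  "local_map n E v s =
     (let (a, b) = mixed_vertex n E s v in ((fst s)(v := a), (snd s)(v := b)))"

text \<open>SDS map F_pi = F_{pi_n} o ... o F_{pi_1}: apply pi_1 first.\<close>
definition sds_map :: "nat \<Rightarrow> (nat \<Rightarrow> nat \<Rightarrow> bool) \<Rightarrow> nat list \<Rightarrow> state \<Rightarrow> state" where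
  "sds_map n E \<pi> = fold (local_map n E) \<pi>"

definition periodic_orbit :: "(state \<Rightarrow> state) \<Rightarrow> state \<Rightarrow> nat \<Rightarrow> bool" where
  "periodic_orbit F s m \<longleftrightarrow> m \<ge> 1 \<and> (F ^^ m) s = s \<and> inj_on (\<lambda>i. (F ^^ i) s) {0..<m}"

end

theory Submission
  imports Defs
begin

text \<open>
  Give every active vertex w the weight (number of active neighbours of w) + 3 - 2 k_w and let
  the energy of a state be the total weight. Let N be the number of active neighbours of v.
  Switching v on requires k_v \<le> N and, since every active edge at v is counted from both
  ends, changes the energy by 2N + 3 - 2(k_v + 1) \<ge> 1; switching v off requires k_v > N + 1
  and changes it by 2k_v - 3 - 2N \<ge> 1. Hence every SDS map strictly increases the energy of
  each state it moves, and no state can return to itself after leaving.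
\<close>

definition active_degree :: "nat \<Rightarrow> (nat \<Rightarrow> nat \<Rightarrow> bool) \<Rightarrow> (nat \<Rightarrow> bool) \<Rightarrow> nat \<Rightarrow> nat" where
  "active_degree n E x v = card {u \<in> nbhd n E v. x u}"

definition energy :: "nat \<Rightarrow> (nat \<Rightarrow> nat \<Rightarrow> bool) \<Rightarrow> state \<Rightarrow> int" where
  "energy n E s =
     (\<Sum>w | w \<in> {1..n} \<and> fst s w. int (active_degree n E (fst s) w) + 3 - 2 * int (snd s w))"

lemma simple_graph_symmetric: "simple_graph n E \<Longrightarrow> E u v = E v u"
  unfolding simple_graph_def by blast

lemma simple_graph_irreflexive: "simple_graph n E \<Longrightarrow> \<not> E v v"
  unfolding simple_graph_def by blast

lemma active_degree_upd_self:
  assumes "simple_graph n E"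
  shows "active_degree n E (x(v := b)) v = active_degree n E x v"
  unfolding active_degree_def nbhd_def
  by (rule arg_cong[where f = card]) (use simple_graph_irreflexive[OF assms] in auto)

lemma active_degree_upd_other:
  assumes "w \<noteq> v" "v \<in> {1..n}"
  shows "active_degree n E (x(v := b)) w
           = active_degree n E (x(v := False)) w + (if b \<and> E w v then 1 else 0)"
proof -
  have "{u \<in> nbhd n E w. (x(v := b)) u}
          = (if b \<and> E w v then insert v else id) {u \<in> nbhd n E w. (x(v := False)) u}"
    using assms by (auto simp: nbhd_def)
  then show ?thesis
    unfolding active_degree_def by (simp add: nbhd_def)
qed

lemma sigma_eq_active_degree:
  assumes "simple_graph n E"
  shows "sigma n E x v = active_degree n E x v + (if x v then 1 else 0)"
proof -
  have "v \<notin> nbhd n E v"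
    using simple_graph_irreflexive[OF assms] by (simp add: nbhd_def)
  moreover have "{u \<in> cnbhd n E v. x u}
                   = (if x v then insert v else id) {u \<in> nbhd n E v. x u}"
    by (auto simp: cnbhd_def)
  ultimately show ?thesis
    unfolding sigma_def active_degree_def by (simp add: nbhd_def)
qed

lemma energy_upd:
  assumes G: "simple_graph n E" and v: "v \<in> {1..n}"
  shows "energy n E (x(v := b), k(v := j))
           = energy n E (x(v := False), k)
             + (if b then 2 * int (active_degree n E x v) + 3 - 2 * int j else 0)"
proof -
  define A where "A = {w. w \<in> {1..n} \<and> (x(v := False)) w}"
  define f where "f w = int (active_degree n E (x(v := False)) w) + 3 - 2 * int (k w)" for w
  define g where "g w = int (active_degree n E (x(v := b)) w) + 3 - 2 * int ((k(v := j)) w)" for w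
  have A: "finite A" "v \<notin> A" by (auto simp: A_def)
  \<comment> \<open>the active neighbours of v, counted from the other end of each edge\<close>
  have in_nbhd: "card {w \<in> A. E w v} = active_degree n E x v"
    unfolding active_degree_def nbhd_def A_def
    by (rule arg_cong[where f = card])
       (auto simp: simple_graph_symmetric[OF G] simple_graph_irreflexive[OF G])
  have "sum g A = (\<Sum>w\<in>A. f w + (if b \<and> E w v then 1 else 0))"
  proof (rule sum.cong)
    fix w assume "w \<in> A"
    with A(2) have "w \<noteq> v" by blast
    from active_degree_upd_other[OF this v, where x = x and b = b] \<open>w \<noteq> v\<close>
    show "g w = f w + (if b \<and> E w v then 1 else 0)"
      by (simp add: f_def g_def)
  qed simp
  also have "\<dots> = sum f A + (if b then int (card {w \<in> A. E w v}) else 0)"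
    using A(1) by (simp add: sum.distrib sum.inter_filter[symmetric])
  finally have g_A: "sum g A = sum f A + (if b then int (active_degree n E x v) else 0)"
    by (simp add: in_nbhd)
  have g_v: "g v = int (active_degree n E x v) + 3 - 2 * int j"
    by (simp add: g_def active_degree_upd_self[OF G])
  have "{w. w \<in> {1..n} \<and> (x(v := b)) w} = (if b then insert v A else A)"
    using v by (auto simp: A_def)
  then have "energy n E (x(v := b), k(v := j)) = sum g (if b then insert v A else A)"
    by (simp add: energy_def g_def)
  also have "\<dots> = sum g A + (if b then g v else 0)"
    using A by simp
  also have "energy n E (x(v := False), k) = sum f A"
    by (simp add: energy_def f_def A_def)
  ultimately show ?thesis
    using g_A g_v by simp
qed

lemma local_map_increases_energy:
  assumes G: "simple_graph n E" and v: "v \<in> {1..n}"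
  shows "local_map n E v s = s \<or> energy n E s < energy n E (local_map n E v s)"
proof -
  obtain x k where s: "s = (x, k)" by force
  define d where "d = int (active_degree n E x v)"
  have \<sigma>: "int (sigma n E x v) = d + (if x v then 1 else 0)"
    by (simp add: d_def sigma_eq_active_degree[OF G])
  have energy_s: "energy n E s = energy n E (x(v := False), k)
                    + (if x v then 2 * d + 3 - 2 * int (k v) else 0)"
    using energy_upd[OF G v, where x = x and k = k and b = "x v" and j = "k v"]
    by (simp add: s d_def)
  consider (switch_on) "\<not> x v" "k v \<le> sigma n E x v"
    | (switch_off) "x v" "sigma n E x v < k v"
    | (fires_iff_active) "(k v \<le> sigma n E x v) = x v"
    by (metis not_le)
  then show ?thesis
  proof cases
    case switch_on
    then have "local_map n E v s = (x(v := True), k(v := k v + 1))"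
      by (simp add: s local_map_def mixed_vertex_def)
    then show ?thesis
      using switch_on \<sigma> energy_s
        energy_upd[OF G v, where x = x and k = k and b = True and j = "k v + 1"]
      by (simp add: d_def)
  next
    case switch_off
    then have "local_map n E v s = (x(v := False), k(v := k v - 1))"
      by (simp add: s local_map_def mixed_vertex_def)
    then show ?thesis
      using switch_off \<sigma> energy_s
        energy_upd[OF G v, where x = x and k = k and b = False and j = "k v - 1"]
      by simp
  next
    case fires_iff_active
    then have "local_map n E v s = s"
      by (auto simp: s local_map_def mixed_vertex_def)
    then show ?thesis ..
  qed
qed

lemma fold_local_map_increases_energy:
  assumes G: "simple_graph n E"
  shows "set vs \<subseteq> {1..n} \<Longrightarrow>
           fold (local_map n E) vs s = s \<or> energy n E s < energy n E (fold (local_map n E) vs s)"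
proof (induction vs arbitrary: s)
  case (Cons v vs)
  then have v: "v \<in> {1..n}" and IH: "\<And>t. fold (local_map n E) vs t = t
               \<or> energy n E t < energy n E (fold (local_map n E) vs t)"
    by auto
  from local_map_increases_energy[OF G v, of s] IH[of "local_map n E v s"] show ?case
    by auto
qed simp

lemma iterate_mono_potential:
  fixes \<phi> :: "'a \<Rightarrow> 'b::order"
  assumes "\<And>t. F t = t \<or> \<phi> t < \<phi> (F t)"
  shows "\<phi> t \<le> \<phi> ((F ^^ j) t)"
proof (induction j)
  case (Suc j)
  then show ?case
    using assms[of "(F ^^ j) t"] by auto
qed simp

lemma periodic_orbit_strict_potential:
  fixes \<phi> :: "state \<Rightarrow> 'b::order"
  assumes strict: "\<And>t. F t = t \<or> \<phi> t < \<phi> (F t)" and orbit: "periodic_orbit F s m"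
  shows "m < 2"
proof (rule ccontr)
  assume "\<not> m < 2"
  then obtain j where m: "m = Suc j" "j \<ge> 1" by (cases m) auto
  have period: "(F ^^ m) s = s" and inj: "inj_on (\<lambda>i. (F ^^ i) s) {0..<m}"
    using orbit unfolding periodic_orbit_def by auto
  have "F s \<noteq> s"
  proof
    assume "F s = s"
    then have "(\<lambda>i. (F ^^ i) s) 0 = (\<lambda>i. (F ^^ i) s) 1" by simp
    from inj_onD[OF inj this] m show False by auto
  qed
  then have "\<phi> s < \<phi> (F s)"
    using strict[of s] by auto
  also have "\<phi> (F s) \<le> \<phi> ((F ^^ j) (F s))"
    by (rule iterate_mono_potential[OF strict])
  also have "(F ^^ j) (F s) = s"
    using period by (simp only: m funpow_Suc_right comp_apply)
  finally show False by simp
qed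

theorem proposition3p6:
  fixes n :: nat and E :: "nat \<Rightarrow> nat \<Rightarrow> bool" and \<pi> :: "nat list" and s :: state and m :: nat
  assumes "simple_graph n E"
    and "distinct \<pi>" and "set \<pi> = {1..n}"
    and "s \<in> state_space n E"
    and "periodic_orbit (sds_map n E \<pi>) s m"
  shows "m < 2"
proof -
  have "sds_map n E \<pi> t = t \<or> energy n E t < energy n E (sds_map n E \<pi> t)" for t
    unfolding sds_map_def
    by (rule fold_local_map_increases_energy[OF assms(1)]) (simp add: assms(3))
  then show ?thesis
    using assms(5) by (rule periodic_orbit_strict_potential)
qed

end
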